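(* Let $D=\{(x_n,y_n)\}_{n=0}^N$ with $x_0<x_1<\dots<x_N$, $I=[x_0,x_N]$, and $\mathcal{J}_D:=\{f\in\mathcal{C}(I): f(x_n)=y_n,\ n=0,\dots,N\}$. For $n=1,\dots,N$ let $L_n$ be the affine map with $L_n(x_0)=x_{n-1}$, $L_n(x_N)=x_n$, and let $\alpha_n,q_n\in\mathcal{C}(I)$ satisfy $\Lambda:=\max_n\|\alpha_n\|_\infty<1$ and the join-up conditions $\alpha_n(x_0)y_0+q_n(x_0)=y_{n-1}$, $\alpha_n(x_N)y_N+q_n(x_N)=y_n$. Define $\widehat{T}:\mathcal{J}_D\to\mathcal{J}_D$ by $\widehat{T}f(x):=\alpha_n(L_n^{-1}(x))\,f(L_n^{-1}(x))+q_n(L_n^{-1}(x))$ for $x\in[x_{n-1},x_n]$, $n=1,\dots,N$. Then $\widehat{T}$ can be extended to a continuous operator $\overline{T}:\mathcal{C}(I)\to\mathcal{J}_D$ (i.e. $\overline{T}|_{\mathcal{J}_D}=\widehat{T}$).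
   Context: $\mathcal{C}(I)$ denotes the Banach space of continuous real functions on $I$ with the supremum norm, and $\mathcal{J}_D$ carries the induced metric. *)

theory Defs
  imports "HOL-Analysis.Analysis"
begin

definition intI :: "(nat \<Rightarrow> real) \<Rightarrow> nat \<Rightarrow> real set" where
  "intI x N = {x 0 .. x N}"

text \<open>Elements of C(I) are represented by real functions continuous on I
  (values outside I are irrelevant).\<close>
definition CI :: "real set \<Rightarrow> (real \<Rightarrow> real) set" where
  "CI I = {f. continuous_on I f}"

definition supnorm :: "real set \<Rightarrow> (real \<Rightarrow> real) \<Rightarrow> real" where
  "supnorm I f = (SUP t\<in>I. \<bar>f t\<bar>)"

definition supdist :: "real set \<Rightarrow> (real \<Rightarrow> real) \<Rightarrow> (real \<Rightarrow> real) \<Rightarrow> real" where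
  "supdist I f g = supnorm I (\<lambda>t. f t - g t)"

definition JD :: "(nat \<Rightarrow> real) \<Rightarrow> (nat \<Rightarrow> real) \<Rightarrow> nat \<Rightarrow> (real \<Rightarrow> real) set" where
  "JD x y N = {f \<in> CI (intI x N). \<forall>n\<le>N. f (x n) = y n}"

definition Lmap :: "(nat \<Rightarrow> real) \<Rightarrow> nat \<Rightarrow> nat \<Rightarrow> real \<Rightarrow> real" where
  "Lmap x N n t = x (n - 1) + (t - x 0) * (x n - x (n - 1)) / (x N - x 0)"

definition Linv :: "(nat \<Rightarrow> real) \<Rightarrow> nat \<Rightarrow> nat \<Rightarrow> real \<Rightarrow> real" where
  "Linv x N n s = x 0 + (s - x (n - 1)) * (x N - x 0) / (x n - x (n - 1))"

definition op_continuous :: "real set \<Rightarrow> ((real \<Rightarrow> real) \<Rightarrow> (real \<Rightarrow> real)) \<Rightarrow> bool" where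
  "op_continuous I T = (\<forall>f\<in>CI I. \<forall>e>0. \<exists>d>0. \<forall>g\<in>CI I.
      supdist I f g < d \<longrightarrow> supdist I (T f) (T g) < e)"

end

theory Submission
  imports Defs
begin

text \<open>Let \<open>P f\<close> be \<open>f\<close> minus the affine function that agrees with \<open>f - y\<close> at \<open>x\<^sub>0\<close> and
  \<open>x\<^sub>N\<close>. Then \<open>P f\<close> takes the prescribed values \<open>y\<^sub>0\<close>, \<open>y\<^sub>N\<close> at the ends of \<open>I\<close>, and \<open>P\<close> is
  the identity on \<open>J\<^sub>D\<close>. The piecewise formula defining T-hat makes sense for every continuous
  \<open>g\<close> with these two endpoint values: the join-up conditions make adjacent pieces agree at the
  inner nodes and take the data values there, so T-hat \<open>g\<close> is a continuous interpolant. The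
  extension is T-bar \<open>f\<close> = T-hat \<open>(P f)\<close>; in the sup norm \<open>P\<close> is 2-Lipschitz and T-hat is
  \<open>\<Lambda>\<close>-Lipschitz, so T-bar is continuous.\<close>

lemma abs_le_supnorm:
  assumes "compact I" "continuous_on I h" "t \<in> I"
  shows "\<bar>h t\<bar> \<le> supnorm I h"
proof -
  have "bounded (h ` I)"
    using assms(1,2) by (intro compact_imp_bounded compact_continuous_image)
  then have "bdd_above ((\<lambda>s. \<bar>h s\<bar>) ` I)"
    by (auto simp: bounded_iff intro: bdd_aboveI2)
  then show ?thesis
    unfolding supnorm_def using assms(3) by (rule cSUP_upper[rotated])
qed

lemma supnorm_le:
  assumes "I \<noteq> {}" "\<And>t. t \<in> I \<Longrightarrow> \<bar>h t\<bar> \<le> B"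
  shows "supnorm I h \<le> B"
  unfolding supnorm_def using assms by (rule cSUP_least)

lemma op_continuous_if_lipschitz:
  assumes "0 \<le> K"
    and lip: "\<And>f g. f \<in> CI I \<Longrightarrow> g \<in> CI I \<Longrightarrow> supdist I (T f) (T g) \<le> K * supdist I f g"
  shows "op_continuous I T"
  unfolding op_continuous_def
proof (intro ballI allI impI)
  fix f and e :: real
  assume f: "f \<in> CI I" and "0 < e"
  show "\<exists>d>0. \<forall>g\<in>CI I. supdist I f g < d \<longrightarrow> supdist I (T f) (T g) < e"
  proof (intro exI[of _ "e / (K + 1)"] conjI ballI impI)
    show "0 < e / (K + 1)" using \<open>0 < e\<close> \<open>0 \<le> K\<close> by simp
  next
    fix g assume g: "g \<in> CI I" and "supdist I f g < e / (K + 1)"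
    then have "K * supdist I f g \<le> K * (e / (K + 1))"
      using \<open>0 \<le> K\<close> by (intro mult_left_mono) auto
    also have "\<dots> < e"
      using \<open>0 < e\<close> \<open>0 \<le> K\<close> by (simp add: field_simps)
    finally show "supdist I (T f) (T g) < e"
      using lip[OF f g] by linarith
  qed
qed

lemma affine_rescale_in_interval:
  fixes a b c d s :: real
  assumes "a < b" "c \<le> d" "s \<in> {a..b}"
  shows "c + (s - a) * (d - c) / (b - a) \<in> {c..d}"
proof -
  have "(s - a) * (d - c) \<le> (b - a) * (d - c)"
    using assms by (intro mult_right_mono) auto
  then have "(s - a) * (d - c) / (b - a) \<le> d - c"
    using \<open>a < b\<close> by (simp add: divide_le_eq mult.commute)
  then show ?thesis
    using assms by auto
qed

lemma atLeastAtMost_eq_UN_consecutive: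
  fixes x :: "nat \<Rightarrow> 'a::linorder"
  assumes "0 < N" "\<And>n. n < N \<Longrightarrow> x n \<le> x (Suc n)"
  shows "{x 0 .. x N} = (\<Union>n\<in>{1..N}. {x (n - 1) .. x n})"
  using assms
proof (induction N)
  case 0
  then show ?case by simp
next
  case (Suc N)
  show ?case
  proof (cases "N = 0")
    case True
    then show ?thesis by simp
  next
    case False
    have "x 0 \<le> x N"
      using Suc.prems(2) by (induction N) (auto intro: order_trans)
    then have "{x 0 .. x (Suc N)} = {x 0 .. x N} \<union> {x N .. x (Suc N)}"
      using Suc.prems(2)[of N] by (auto simp: ivl_disj_un)
    also have "\<dots> = (\<Union>n\<in>{1..N}. {x (n - 1) .. x n}) \<union> {x N .. x (Suc N)}"
      using Suc False by simp
    also have "\<dots> = (\<Union>n\<in>{1..Suc N}. {x (n - 1) .. x n})"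
      by (auto simp: atLeastAtMostSuc_conv)
    finally show ?thesis .
  qed
qed

definition endpoint_fix :: "real \<Rightarrow> real \<Rightarrow> real \<Rightarrow> real \<Rightarrow> (real \<Rightarrow> real) \<Rightarrow> real \<Rightarrow> real" where
  "endpoint_fix a b ya yb f t = f t - ((f a - ya) + (t - a) * (((f b - yb) - (f a - ya)) / (b - a)))"

lemma endpoint_fix_left: "endpoint_fix a b ya yb f a = ya"
  by (simp add: endpoint_fix_def)

lemma endpoint_fix_right: "a \<noteq> b \<Longrightarrow> endpoint_fix a b ya yb f b = yb"
  by (simp add: endpoint_fix_def)

lemma endpoint_fix_id: "f a = ya \<Longrightarrow> f b = yb \<Longrightarrow> endpoint_fix a b ya yb f = f"
  by (simp add: endpoint_fix_def fun_eq_iff)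

lemma continuous_on_endpoint_fix:
  "continuous_on S f \<Longrightarrow> continuous_on S (endpoint_fix a b ya yb f)"
  unfolding endpoint_fix_def by (intro continuous_intros)

lemma supdist_endpoint_fix_le:
  fixes a b :: real
  assumes "a < b" "continuous_on {a..b} f" "continuous_on {a..b} g"
  shows "supdist {a..b} (endpoint_fix a b ya yb f) (endpoint_fix a b ya yb g)
           \<le> 2 * supdist {a..b} f g"
  unfolding supdist_def
proof (rule supnorm_le)
  show "{a..b} \<noteq> {}" using \<open>a < b\<close> by simp
next
  fix t assume t: "t \<in> {a..b}"
  let ?D = "supnorm {a..b} (\<lambda>s. f s - g s)"
  have dist_le: "\<bar>f s - g s\<bar> \<le> ?D" if "s \<in> {a..b}" for s
    using assms that by (intro abs_le_supnorm continuous_intros) auto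
  define r where "r = (t - a) / (b - a)"
  have "0 \<le> r" "r \<le> 1"
    using t \<open>a < b\<close> by (auto simp: r_def divide_le_eq)
  have "endpoint_fix a b ya yb f t - endpoint_fix a b ya yb g t
          = (1 - r) * ((f t - g t) - (f a - g a)) + r * ((f t - g t) - (f b - g b))"
    by (simp add: endpoint_fix_def r_def algebra_simps add_divide_distrib diff_divide_distrib)
  also have "\<bar>\<dots>\<bar> \<le> (1 - r) * (2 * ?D) + r * (2 * ?D)"
  proof -
    have "\<bar>(f t - g t) - (f a - g a)\<bar> \<le> 2 * ?D" "\<bar>(f t - g t) - (f b - g b)\<bar> \<le> 2 * ?D"
      using dist_le[OF t] dist_le[of a] dist_le[of b] \<open>a < b\<close> by auto
    moreover have "\<bar>(1 - r) * u + r * v\<bar> \<le> (1 - r) * \<bar>u\<bar> + r * \<bar>v\<bar>" for u v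
      using \<open>0 \<le> r\<close> \<open>r \<le> 1\<close> abs_triangle_ineq[of "(1 - r) * u" "r * v"] by (simp add: abs_mult)
    ultimately show ?thesis
      using \<open>0 \<le> r\<close> \<open>r \<le> 1\<close> by (smt (verit) mult_left_mono)
  qed
  finally show "\<bar>endpoint_fix a b ya yb f t - endpoint_fix a b ya yb g t\<bar> \<le> 2 * ?D"
    by (simp add: algebra_simps)
qed

locale fractal_interpolation =
  fixes N :: nat and x y :: "nat \<Rightarrow> real" and \<alpha> q :: "nat \<Rightarrow> real \<Rightarrow> real"
  assumes N_pos: "0 < N"
    and incr: "\<And>n. n < N \<Longrightarrow> x n < x (Suc n)"
    and cont_\<alpha>: "\<And>n. n \<in> {1..N} \<Longrightarrow> \<alpha> n \<in> CI (intI x N)"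
    and cont_q: "\<And>n. n \<in> {1..N} \<Longrightarrow> q n \<in> CI (intI x N)"
    and join0: "\<And>n. n \<in> {1..N} \<Longrightarrow> \<alpha> n (x 0) * y 0 + q n (x 0) = y (n - 1)"
    and joinN: "\<And>n. n \<in> {1..N} \<Longrightarrow> \<alpha> n (x N) * y N + q n (x N) = y n"
begin

lemma x_less: "i < j \<Longrightarrow> j \<le> N \<Longrightarrow> x i < x j"
proof (induction j)
  case 0
  then show ?case by simp
next
  case (Suc j)
  then show ?case
    using incr[of j] by (cases "i = j") (auto simp: less_Suc_eq)
qed

lemma x0_less_xN: "x 0 < x N"
  using x_less N_pos by blast

lemma x_pred_less: "n \<in> {1..N} \<Longrightarrow> x (n - 1) < x n"
  using x_less[of "n - 1" n] by auto

lemma intI_eq: "intI x N = {x 0 .. x N}"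
  by (simp add: intI_def)

lemma intI_eq_UN_pieces: "intI x N = (\<Union>n\<in>{1..N}. {x (n - 1) .. x n})"
  unfolding intI_eq using N_pos incr
  by (intro atLeastAtMost_eq_UN_consecutive) (auto intro: less_imp_le)

lemma Linv_in_intI: "n \<in> {1..N} \<Longrightarrow> s \<in> {x (n - 1) .. x n} \<Longrightarrow> Linv x N n s \<in> intI x N"
  unfolding Linv_def intI_eq
  using x_pred_less x0_less_xN by (intro affine_rescale_in_interval) auto

lemma Linv_left: "Linv x N n (x (n - 1)) = x 0"
  by (simp add: Linv_def)

lemma Linv_right: "n \<in> {1..N} \<Longrightarrow> Linv x N n (x n) = x N"
  using x_pred_less[of n] by (simp add: Linv_def)

lemma continuous_on_Linv: "continuous_on S (Linv x N n)"
proof -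
  have "Linv x N n = (\<lambda>s. x 0 + (s - x (n - 1)) * ((x N - x 0) / (x n - x (n - 1))))"
    by (simp add: Linv_def fun_eq_iff)
  moreover have "continuous_on S (\<lambda>s. x 0 + (s - x (n - 1)) * ((x N - x 0) / (x n - x (n - 1))))"
    by (intro continuous_intros)
  ultimately show ?thesis
    by simp
qed

definition piece_map :: "(real \<Rightarrow> real) \<Rightarrow> nat \<Rightarrow> real \<Rightarrow> real" where
  "piece_map g n s = \<alpha> n (Linv x N n s) * g (Linv x N n s) + q n (Linv x N n s)"

lemma piece_map_left: "n \<in> {1..N} \<Longrightarrow> g (x 0) = y 0 \<Longrightarrow> piece_map g n (x (n - 1)) = y (n - 1)"
  unfolding piece_map_def Linv_left using join0 by simp

lemma piece_map_right: "n \<in> {1..N} \<Longrightarrow> g (x N) = y N \<Longrightarrow> piece_map g n (x n) = y n"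
  unfolding piece_map_def using Linv_right joinN by simp

lemma continuous_on_piece_map:
  assumes n: "n \<in> {1..N}" and g: "continuous_on (intI x N) g"
  shows "continuous_on {x (n - 1) .. x n} (piece_map g n)"
proof -
  have into: "Linv x N n ` {x (n - 1) .. x n} \<subseteq> intI x N"
    using Linv_in_intI n by blast
  have "continuous_on (intI x N) (\<alpha> n)" "continuous_on (intI x N) (q n)"
    using cont_\<alpha>[OF n] cont_q[OF n] by (auto simp: CI_def)
  then show ?thesis
    unfolding piece_map_def
    using continuous_on_compose2[OF _ continuous_on_Linv into] g by (intro continuous_intros) auto
qed

text \<open>Adjacent pieces meet only at a node, where both take the data value.\<close>
lemma piece_map_agree:
  assumes g0: "g (x 0) = y 0" and gN: "g (x N) = y N"
    and n: "n \<in> {1..N}" and m: "m \<in> {1..N}"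
    and s: "s \<in> {x (n - 1) .. x n}" "s \<in> {x (m - 1) .. x m}"
  shows "piece_map g n s = piece_map g m s"
proof -
  have adjacent: "piece_map g n s = piece_map g m s"
    if "n < m" "n \<in> {1..N}" "m \<in> {1..N}" "s \<in> {x (n - 1) .. x n}" "s \<in> {x (m - 1) .. x m}"
    for n m
  proof -
    have "\<not> n < m - 1"
    proof
      assume "n < m - 1"
      then have "x n < x (m - 1)"
        using \<open>m \<in> {1..N}\<close> by (intro x_less) auto
      then show False
        using that(4,5) by simp
    qed
    then have "m - 1 = n"
      using \<open>n < m\<close> by linarith
    then have "s = x n"
      using that by auto
    then show ?thesis
      using piece_map_left[of m g] piece_map_right[of n g] that(2,3) g0 gN \<open>m - 1 = n\<close>
      by simp
  qed
  consider "n < m" | "n = m" | "m < n"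
    by linarith
  then show ?thesis
  proof cases
    case 1
    then show ?thesis using adjacent[OF _ n m s] by blast
  next
    case 2
    then show ?thesis by simp
  next
    case 3
    then show ?thesis using adjacent[OF _ m n s(2,1)] by simp
  qed
qed

definition glued_map :: "(real \<Rightarrow> real) \<Rightarrow> real \<Rightarrow> real" where
  "glued_map g s = (if \<exists>n\<in>{1..N}. s \<in> {x (n - 1) .. x n}
     then piece_map g (SOME n. n \<in> {1..N} \<and> s \<in> {x (n - 1) .. x n}) s else 0)"

lemma glued_map_eq:
  assumes "g (x 0) = y 0" "g (x N) = y N" "n \<in> {1..N}" "s \<in> {x (n - 1) .. x n}"
  shows "glued_map g s = piece_map g n s"
proof -
  let ?P = "\<lambda>n. n \<in> {1..N} \<and> s \<in> {x (n - 1) .. x n}"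
  have "\<exists>n. ?P n"
    using assms(3,4) by blast
  then have "?P (SOME n. ?P n)"
    by (rule someI_ex)
  then have "piece_map g (SOME n. ?P n) s = piece_map g n s"
    using piece_map_agree[OF assms(1,2) _ assms(3) _ assms(4)] by (elim conjE)
  moreover have "\<exists>n\<in>{1..N}. s \<in> {x (n - 1) .. x n}"
    using assms(3,4) by blast
  ultimately show ?thesis
    unfolding glued_map_def by (simp only: if_True)
qed

lemma glued_map_continuous:
  assumes "continuous_on (intI x N) g" "g (x 0) = y 0" "g (x N) = y N"
  shows "continuous_on (intI x N) (glued_map g)"
  unfolding intI_eq_UN_pieces
proof (rule continuous_on_closed_Union)
  fix n assume n: "n \<in> {1..N}"
  show "continuous_on {x (n - 1) .. x n} (glued_map g)"
    by (rule continuous_on_eq[OF continuous_on_piece_map[OF n assms(1)]])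
      (simp add: glued_map_eq[OF assms(2,3) n])
qed auto

lemma glued_map_nodes:
  assumes "g (x 0) = y 0" "g (x N) = y N" "m \<le> N"
  shows "glued_map g (x m) = y m"
proof (cases "m = 0")
  case True
  have "1 \<in> {1..N}" using N_pos by simp
  then show ?thesis
    using glued_map_eq[OF assms(1,2), of 1 "x 0"] piece_map_left[of 1 g] x_pred_less[of 1] assms True
    by simp
next
  case False
  then have "m \<in> {1..N}" using assms(3) by simp
  then show ?thesis
    using glued_map_eq[OF assms(1,2), of m "x m"] piece_map_right[of m g] x_pred_less[of m] assms
    by simp
qed

lemma abs_\<alpha>_le_supnorm: "n \<in> {1..N} \<Longrightarrow> t \<in> intI x N \<Longrightarrow> \<bar>\<alpha> n t\<bar> \<le> supnorm (intI x N) (\<alpha> n)"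
  using cont_\<alpha> by (intro abs_le_supnorm) (auto simp: CI_def intI_eq)

lemma supdist_glued_map_le:
  assumes \<Lambda>: "\<And>n. n \<in> {1..N} \<Longrightarrow> supnorm (intI x N) (\<alpha> n) \<le> \<Lambda>"
    and g: "continuous_on (intI x N) g" "g (x 0) = y 0" "g (x N) = y N"
    and h: "continuous_on (intI x N) h" "h (x 0) = y 0" "h (x N) = y N"
  shows "supdist (intI x N) (glued_map g) (glued_map h) \<le> \<Lambda> * supdist (intI x N) g h"
  unfolding supdist_def
proof (rule supnorm_le)
  show "intI x N \<noteq> {}"
    using x0_less_xN by (simp add: intI_eq)
next
  fix s assume "s \<in> intI x N"
  then obtain n where n: "n \<in> {1..N}" and s: "s \<in> {x (n - 1) .. x n}"
    unfolding intI_eq_UN_pieces by blast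
  define t where "t = Linv x N n s"
  have t: "t \<in> intI x N"
    unfolding t_def using Linv_in_intI[OF n s] .
  have "glued_map g s - glued_map h s = \<alpha> n t * (g t - h t)"
    using glued_map_eq[OF g(2,3) n s] glued_map_eq[OF h(2,3) n s]
    by (simp add: piece_map_def t_def algebra_simps)
  also have "\<bar>\<dots>\<bar> \<le> \<Lambda> * supnorm (intI x N) (\<lambda>t. g t - h t)"
    unfolding abs_mult
  proof (rule mult_mono)
    show "\<bar>\<alpha> n t\<bar> \<le> \<Lambda>"
      using abs_\<alpha>_le_supnorm[OF n t] \<Lambda>[OF n] by linarith
    then show "0 \<le> \<Lambda>"
      by linarith
    show "\<bar>g t - h t\<bar> \<le> supnorm (intI x N) (\<lambda>t. g t - h t)"
      using g(1) h(1) t by (intro abs_le_supnorm continuous_intros) (auto simp: intI_eq)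
  qed simp
  finally show "\<bar>glued_map g s - glued_map h s\<bar> \<le> \<Lambda> * supnorm (intI x N) (\<lambda>t. g t - h t)" .
qed

definition extended_operator :: "(real \<Rightarrow> real) \<Rightarrow> real \<Rightarrow> real" where
  "extended_operator f = glued_map (endpoint_fix (x 0) (x N) (y 0) (y N) f)"

lemma extended_operator_in_JD:
  assumes "f \<in> CI (intI x N)"
  shows "extended_operator f \<in> JD x y N"
proof -
  let ?g = "endpoint_fix (x 0) (x N) (y 0) (y N) f"
  have "continuous_on (intI x N) ?g"
    using assms by (intro continuous_on_endpoint_fix) (simp add: CI_def)
  moreover have "?g (x 0) = y 0" "?g (x N) = y N"
    using x0_less_xN by (simp_all add: endpoint_fix_left endpoint_fix_right)
  ultimately show ?thesis
    unfolding extended_operator_def JD_def CI_def using glued_map_continuous glued_map_nodes by simp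
qed

lemma extended_operator_eq_glued_map: "f \<in> JD x y N \<Longrightarrow> extended_operator f = glued_map f"
  unfolding extended_operator_def JD_def by (simp add: endpoint_fix_id)

lemma op_continuous_extended_operator:
  assumes \<Lambda>: "\<And>n. n \<in> {1..N} \<Longrightarrow> supnorm (intI x N) (\<alpha> n) \<le> \<Lambda>"
  shows "op_continuous (intI x N) extended_operator"
proof -
  have "1 \<in> {1..N}" "x 0 \<in> intI x N"
    using N_pos x0_less_xN by (auto simp: intI_eq)
  then have "0 \<le> \<Lambda>"
    using abs_\<alpha>_le_supnorm \<Lambda> by (smt (verit))
  show ?thesis
  proof (rule op_continuous_if_lipschitz[of "2 * \<Lambda>"])
    show "0 \<le> 2 * \<Lambda>"
      using \<open>0 \<le> \<Lambda>\<close> by simp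
  next
    fix f g assume "f \<in> CI (intI x N)" "g \<in> CI (intI x N)"
    then have f: "continuous_on {x 0 .. x N} f" and g: "continuous_on {x 0 .. x N} g"
      by (simp_all add: CI_def intI_eq)
    let ?P = "endpoint_fix (x 0) (x N) (y 0) (y N)"
    have "supdist (intI x N) (extended_operator f) (extended_operator g)
            \<le> \<Lambda> * supdist (intI x N) (?P f) (?P g)"
      unfolding extended_operator_def using x0_less_xN f g
      by (intro supdist_glued_map_le \<Lambda>)
        (auto simp: intI_eq endpoint_fix_left endpoint_fix_right continuous_on_endpoint_fix)
    also have "\<dots> \<le> \<Lambda> * (2 * supdist (intI x N) f g)"
      unfolding intI_eq using \<open>0 \<le> \<Lambda>\<close> x0_less_xN f g
      by (intro mult_left_mono supdist_endpoint_fix_le)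
    finally show "supdist (intI x N) (extended_operator f) (extended_operator g)
        \<le> 2 * \<Lambda> * supdist (intI x N) f g"
      by simp
  qed
qed

end

theorem theorem4p3:
  fixes N :: nat and x y :: "nat \<Rightarrow> real"
    and \<alpha> q :: "nat \<Rightarrow> real \<Rightarrow> real"
  assumes N_pos: "0 < N"
    and incr: "\<And>n. n < N \<Longrightarrow> x n < x (Suc n)"
    and cont_\<alpha>: "\<And>n. n \<in> {1..N} \<Longrightarrow> \<alpha> n \<in> CI (intI x N)"
    and cont_q: "\<And>n. n \<in> {1..N} \<Longrightarrow> q n \<in> CI (intI x N)"
    and Lambda: "Max ((\<lambda>n. supnorm (intI x N) (\<alpha> n)) ` {1..N}) < 1"
    and join0: "\<And>n. n \<in> {1..N} \<Longrightarrow> \<alpha> n (x 0) * y 0 + q n (x 0) = y (n - 1)"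
    and joinN: "\<And>n. n \<in> {1..N} \<Longrightarrow> \<alpha> n (x N) * y N + q n (x N) = y n"
  shows "\<exists>Tbar :: (real \<Rightarrow> real) \<Rightarrow> (real \<Rightarrow> real).
           (\<forall>f\<in>CI (intI x N). Tbar f \<in> JD x y N)
         \<and> op_continuous (intI x N) Tbar
         \<and> (\<forall>f\<in>JD x y N. \<forall>n\<in>{1..N}. \<forall>s\<in>{x (n - 1) .. x n}.
              Tbar f s = \<alpha> n (Linv x N n s) * f (Linv x N n s) + q n (Linv x N n s))"
proof -
  interpret fractal_interpolation N x y \<alpha> q
    using N_pos incr cont_\<alpha> cont_q join0 joinN by unfold_locales
  have "supnorm (intI x N) (\<alpha> n) \<le> Max ((\<lambda>n. supnorm (intI x N) (\<alpha> n)) ` {1..N})"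
    if "n \<in> {1..N}" for n
    using that by (intro Max_ge) auto
  then have "op_continuous (intI x N) extended_operator"
    by (rule op_continuous_extended_operator)
  moreover have "extended_operator f s = \<alpha> n (Linv x N n s) * f (Linv x N n s) + q n (Linv x N n s)"
    if "f \<in> JD x y N" "n \<in> {1..N}" "s \<in> {x (n - 1) .. x n}" for f n s
    using that glued_map_eq[of f n s]
    by (simp add: extended_operator_eq_glued_map piece_map_def JD_def)
  ultimately show ?thesis
    using extended_operator_in_JD by blast
qed

end
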